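(* There exist universal constants $c_2>0$ and $\eta_0>0$ such that, for the symmetric Gaussian mixture with $\|\theta^*\|_2/\sigma\ge\eta\ge\eta_0$, there is a constant $\gamma\in(0,1)$ with $\gamma\le\exp(-c_2\eta^2)$ such that for all $\theta$ with $\|\theta-\theta^*\|_2\le\|\theta^*\|_2/4$, $$\big\|\mathbb{E}\big[2(w_\theta(Y)-w_{\theta^*}(Y))Y\big]\big\|_2\le\gamma\|\theta-\theta^*\|_2.$$
   Context: Gaussian mixture model: $Y=S\theta^*+V$, $S$ a uniform random sign independent of $V\sim N(0,\sigma^2I_d)$. Weight $w_\theta(y)=\dfrac{\exp(-\|\theta-y\|_2^2/(2\sigma^2))}{\exp(-\|\theta-y\|_2^2/(2\sigma^2))+\exp(-\|\theta+y\|_2^2/(2\sigma^2))}$. *)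

theory Defs
  imports "HOL-Probability.Probability"
begin

text \<open>Vectors in R^d are represented as functions nat => real, of which only the
  coordinates i < d are relevant. This allows the constants to be uniform in d.\<close>

definition vnorm :: "nat \<Rightarrow> (nat \<Rightarrow> real) \<Rightarrow> real" where
  "vnorm d x = sqrt (\<Sum>i<d. (x i)\<^sup>2)"

definition gauss :: "nat \<Rightarrow> real \<Rightarrow> (nat \<Rightarrow> real) measure" where
  "gauss d \<sigma> = PiM {..<d} (\<lambda>_. density lborel (normal_density 0 \<sigma>))"

text \<open>Expectation of f(Y) where Y = S theta* + V, S uniform on {-1,1}, independent of V.\<close>
definition gmm_expect :: "nat \<Rightarrow> real \<Rightarrow> (nat \<Rightarrow> real) \<Rightarrow> ((nat \<Rightarrow> real) \<Rightarrow> real) \<Rightarrow> real" where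
  "gmm_expect d \<sigma> \<theta>s f =
     (1/2) * (\<integral>v. f (\<lambda>i. \<theta>s i + v i) \<partial>gauss d \<sigma>)
   + (1/2) * (\<integral>v. f (\<lambda>i. - \<theta>s i + v i) \<partial>gauss d \<sigma>)"

definition wgt :: "nat \<Rightarrow> real \<Rightarrow> (nat \<Rightarrow> real) \<Rightarrow> (nat \<Rightarrow> real) \<Rightarrow> real" where
  "wgt d \<sigma> \<theta> y =
     exp (- (vnorm d (\<lambda>i. \<theta> i - y i))\<^sup>2 / (2 * \<sigma>\<^sup>2)) /
     (exp (- (vnorm d (\<lambda>i. \<theta> i - y i))\<^sup>2 / (2 * \<sigma>\<^sup>2))
      + exp (- (vnorm d (\<lambda>i. \<theta> i + y i))\<^sup>2 / (2 * \<sigma>\<^sup>2)))"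

end

theory Submission
  imports Defs
begin

(*
   Write z = E[2(w[\<theta>](Y) - w[\<theta>*](Y)) Y], \<Delta> = \<theta> - \<theta>* and Z = |z|.

   The weight is a logistic function of the inner product: w[\<theta>](y) = logistic (2\<langle>\<theta>,y\<rangle>/\<sigma>\<^sup>2).
   The logistic function is Lipschitz with an exponentially small local constant, so by
   AM-GM (with a free parameter k > 0) the integrand of Z\<^sup>2 = E[2(w[\<theta>] - w[\<theta>*])\<langle>z,Y\<rangle>] is bounded
   pointwise by exponentially tilted quadratic forms in Y.  Their Gaussian expectations are
   computed in closed form (one-dimensional tilted moments, multiplied over coordinates), and
   for \<theta> close to \<theta>* they are at most e^(-R/8\<sigma>\<^sup>2)(R + \<sigma>\<^sup>2)|u|\<^sup>2 where R = |\<theta>*|\<^sup>2.  This gives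
   Z\<^sup>2 \<le> A (k |\<Delta>|\<^sup>2 + Z\<^sup>2/k) for all k > 0, hence Z \<le> 2A|\<Delta>|, and 2A \<le> exp(-R/(24\<sigma>\<^sup>2)) once
   R/\<sigma>\<^sup>2 \<ge> 2500.  The theorem follows with c\<^sub>2 = 1/24 and \<eta>\<^sub>0 = 50.
 *)

section \<open>Tilted Gaussian moments\<close>

(* Moments of order n \<le> 2 of N(a, \<sigma>\<^sup>2). *)
definition gauss_moment :: "real \<Rightarrow> nat \<Rightarrow> real \<Rightarrow> real" where
  "gauss_moment \<sigma> n a = (if n = 0 then 1 else if n = 1 then a else a\<^sup>2 + \<sigma>\<^sup>2)"

lemma normal_density_tilt:
  assumes "\<sigma> > 0"
  shows "normal_density 0 \<sigma> x * exp (c * x) = exp (\<sigma>\<^sup>2 * c\<^sup>2 / 2) * normal_density (\<sigma>\<^sup>2 * c) \<sigma> x"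
proof -
  have "- x\<^sup>2 / (2 * \<sigma>\<^sup>2) + c * x = \<sigma>\<^sup>2 * c\<^sup>2 / 2 + (- (x - \<sigma>\<^sup>2 * c)\<^sup>2 / (2 * \<sigma>\<^sup>2))"
    using assms by (simp add: field_simps power2_eq_square)
  then show ?thesis
    unfolding normal_density_def by (simp add: exp_add[symmetric] mult.commute mult.left_commute)
qed

lemma normal_poly_moment:
  assumes s: "\<sigma> > 0" and n: "n \<le> 2"
  shows "has_bochner_integral lborel (\<lambda>x. normal_density \<mu> \<sigma> x * (m + x) ^ n) (gauss_moment \<sigma> n (m + \<mu>))"
proof -
  have e0: "has_bochner_integral lborel (\<lambda>x. normal_density \<mu> \<sigma> x) 1"
    using integrable_normal_density[OF s, of \<mu>] integral_normal_density[OF s, of \<mu>]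
    by (simp add: has_bochner_integral_iff)
  have e1: "has_bochner_integral lborel (\<lambda>x. normal_density \<mu> \<sigma> x * (x - \<mu>)) 0"
    using normal_moment_odd[OF s, of \<mu> 0] by simp
  have e2: "has_bochner_integral lborel (\<lambda>x. normal_density \<mu> \<sigma> x * (x - \<mu>)\<^sup>2) (\<sigma>\<^sup>2)"
    using normal_moment_even[OF s, of \<mu> 1] s by (simp add: fact_numeral)
  consider "n = 0" | "n = 1" | "n = 2" using n by linarith
  then show ?thesis
  proof cases
    case 1
    then show ?thesis using e0 by (simp add: gauss_moment_def)
  next
    case 2
    have "has_bochner_integral lborel
        (\<lambda>x. normal_density \<mu> \<sigma> x * (x - \<mu>) + (m + \<mu>) * normal_density \<mu> \<sigma> x) (0 + (m + \<mu>) * 1)"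
      by (intro has_bochner_integral_add e1 has_bochner_integral_mult_right e0)
    then show ?thesis using 2 by (simp add: gauss_moment_def algebra_simps)
  next
    case 3
    have "has_bochner_integral lborel
        (\<lambda>x. normal_density \<mu> \<sigma> x * (x - \<mu>)\<^sup>2 + (2 * (m + \<mu>)) * (normal_density \<mu> \<sigma> x * (x - \<mu>))
             + (m + \<mu>)\<^sup>2 * normal_density \<mu> \<sigma> x)
        (\<sigma>\<^sup>2 + (2 * (m + \<mu>)) * 0 + (m + \<mu>)\<^sup>2 * 1)"
      by (intro has_bochner_integral_add e1 e2 has_bochner_integral_mult_right e0)
    then show ?thesis using 3 by (simp add: gauss_moment_def algebra_simps power2_eq_square)
  qed
qed

lemma tilted_normal_moment:
  assumes s: "\<sigma> > 0" and n: "n \<le> 2"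
  shows "has_bochner_integral (density lborel (normal_density 0 \<sigma>)) (\<lambda>x. exp (c * x) * (m + x) ^ n)
           (exp (\<sigma>\<^sup>2 * c\<^sup>2 / 2) * gauss_moment \<sigma> n (m + \<sigma>\<^sup>2 * c))"
proof (rule has_bochner_integral_density)
  have "(\<lambda>x. normal_density 0 \<sigma> x *\<^sub>R (exp (c * x) * (m + x) ^ n)) =
        (\<lambda>x. exp (\<sigma>\<^sup>2 * c\<^sup>2 / 2) * (normal_density (\<sigma>\<^sup>2 * c) \<sigma> x * (m + x) ^ n))"
    using normal_density_tilt[OF s] by (simp add: fun_eq_iff mult.assoc[symmetric])
  then show "has_bochner_integral lborel (\<lambda>x. normal_density 0 \<sigma> x *\<^sub>R (exp (c * x) * (m + x) ^ n))
     (exp (\<sigma>\<^sup>2 * c\<^sup>2 / 2) * gauss_moment \<sigma> n (m + \<sigma>\<^sup>2 * c))"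
    using has_bochner_integral_mult_right[OF normal_poly_moment[OF s n, of "\<sigma>\<^sup>2 * c" m]] by simp
qed auto

lemma gauss_prob_space: "\<sigma> > 0 \<Longrightarrow> prob_space (gauss d \<sigma>)"
  unfolding gauss_def by (rule prob_space_PiM) (rule prob_space_normal_density)

lemma gauss_factors_sigma_finite:
  "\<sigma> > 0 \<Longrightarrow> product_sigma_finite (\<lambda>_. density lborel (normal_density 0 \<sigma>))"
  unfolding product_sigma_finite_def
  using prob_space_normal_density prob_space_imp_sigma_finite by blast

lemma prod_power_indicator:
  fixes x :: "nat \<Rightarrow> real"
  assumes "i < d"
  shows "(\<Prod>k<d. x k ^ (if k = i then 1 else 0)) = x i"
proof -
  have "(\<Prod>k<d. x k ^ (if k = i then 1 else 0)) = (\<Prod>k<d. (if k = i then x k else 1))"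
    by (intro prod.cong) auto
  also have "\<dots> = x i" using assms by (simp add: prod.delta)
  finally show ?thesis .
qed

lemma prod_gauss_moment_pair:
  fixes a :: "nat \<Rightarrow> real"
  assumes ij: "i < d" "j < d"
  shows "(\<Prod>k<d. gauss_moment \<sigma> ((if k = i then 1 else 0) + (if k = j then 1 else 0)) (a k)) =
      a i * a j + (if i = j then \<sigma>\<^sup>2 else 0)"
proof (cases "i = j")
  case True
  have "(\<Prod>k<d. gauss_moment \<sigma> ((if k = i then 1 else 0) + (if k = j then 1 else 0)) (a k)) =
      (\<Prod>k<d. if k = i then (a k)\<^sup>2 + \<sigma>\<^sup>2 else 1)"
    by (intro prod.cong) (auto simp: gauss_moment_def True)
  also have "\<dots> = (a i)\<^sup>2 + \<sigma>\<^sup>2" using ij by (simp add: prod.delta)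
  finally show ?thesis using True by (simp add: power2_eq_square)
next
  case False
  have "(\<Prod>k<d. gauss_moment \<sigma> ((if k = i then 1 else 0) + (if k = j then 1 else 0)) (a k)) =
      (\<Prod>k<d. (if k = i then a k else 1) * (if k = j then a k else 1))"
    by (intro prod.cong) (auto simp: gauss_moment_def False)
  also have "\<dots> = a i * a j" using ij by (simp add: prod.distrib prod.delta)
  finally show ?thesis using False by simp
qed

(* Second-order tilted moments of N(0, \<sigma>\<^sup>2 I\<^sub>d): the integrand factorises over the
   coordinates, so its integral is the product of the one-dimensional tilted moments. *)
lemma gauss_tilted_product_moment:
  assumes s: "\<sigma> > 0" and ij: "i < d" "j < d"
  shows "has_bochner_integral (gauss d \<sigma>) (\<lambda>v. (m i + v i) * (m j + v j) * exp (\<Sum>k<d. c k * v k))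
     (exp (\<sigma>\<^sup>2 * (\<Sum>k<d. (c k)\<^sup>2) / 2) *
        ((m i + \<sigma>\<^sup>2 * c i) * (m j + \<sigma>\<^sup>2 * c j) + (if i = j then \<sigma>\<^sup>2 else 0)))"
proof -
  interpret P: product_sigma_finite "\<lambda>_. density lborel (normal_density 0 \<sigma>)"
    using gauss_factors_sigma_finite[OF s] .
  define N where "N k = (if k = i then 1 else 0) + (if k = j then 1 else (0::nat))" for k
  define f where "f k t = exp (c k * t) * (m k + t) ^ N k" for k t
  have N2: "N k \<le> 2" for k unfolding N_def by auto
  have hb: "has_bochner_integral (density lborel (normal_density 0 \<sigma>)) (f k)
           (exp (\<sigma>\<^sup>2 * (c k)\<^sup>2 / 2) * gauss_moment \<sigma> (N k) (m k + \<sigma>\<^sup>2 * c k))" for k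
    unfolding f_def using tilted_normal_moment[OF s N2] .
  have int: "integrable (gauss d \<sigma>) (\<lambda>v. \<Prod>k<d. f k (v k))"
    unfolding gauss_def using hb
    by (intro P.product_integrable_prod) (auto simp: has_bochner_integral_iff)
  have val: "integral\<^sup>L (gauss d \<sigma>) (\<lambda>v. \<Prod>k<d. f k (v k)) =
     (\<Prod>k<d. exp (\<sigma>\<^sup>2 * (c k)\<^sup>2 / 2) * gauss_moment \<sigma> (N k) (m k + \<sigma>\<^sup>2 * c k))"
    unfolding gauss_def using hb
    by (subst P.product_integral_prod) (auto simp: has_bochner_integral_iff)
  have integrand: "(\<Prod>k<d. f k (v k)) = (m i + v i) * (m j + v j) * exp (\<Sum>k<d. c k * v k)" for v
  proof -
    have "(\<Prod>k<d. f k (v k)) = (\<Prod>k<d. exp (c k * v k)) *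
        ((\<Prod>k<d. (m k + v k) ^ (if k = i then 1 else 0)) * (\<Prod>k<d. (m k + v k) ^ (if k = j then 1 else 0)))"
      unfolding f_def N_def by (simp add: power_add prod.distrib)
    also have "\<dots> = exp (\<Sum>k<d. c k * v k) * ((m i + v i) * (m j + v j))"
      using ij by (simp add: prod_power_indicator exp_sum)
    finally show ?thesis by simp
  qed
  have moments: "(\<Prod>k<d. gauss_moment \<sigma> (N k) (m k + \<sigma>\<^sup>2 * c k)) =
      (m i + \<sigma>\<^sup>2 * c i) * (m j + \<sigma>\<^sup>2 * c j) + (if i = j then \<sigma>\<^sup>2 else 0)"
    unfolding N_def by (rule prod_gauss_moment_pair[OF ij])
  have "(\<Prod>k<d. exp (\<sigma>\<^sup>2 * (c k)\<^sup>2 / 2) * gauss_moment \<sigma> (N k) (m k + \<sigma>\<^sup>2 * c k)) =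
     exp (\<sigma>\<^sup>2 * (\<Sum>k<d. (c k)\<^sup>2) / 2) *
       ((m i + \<sigma>\<^sup>2 * c i) * (m j + \<sigma>\<^sup>2 * c j) + (if i = j then \<sigma>\<^sup>2 else 0))"
    by (simp add: prod.distrib moments exp_sum[symmetric] sum_distrib_left sum_divide_distrib)
  then show ?thesis using int val integrand by (simp add: has_bochner_integral_iff)
qed

lemma gauss_tilted_quadratic:
  assumes s: "\<sigma> > 0"
  shows "has_bochner_integral (gauss d \<sigma>)
     (\<lambda>v. (\<Sum>i<d. u i * (m i + v i))\<^sup>2 * exp (\<Sum>k<d. c k * v k))
     (exp (\<sigma>\<^sup>2 * (\<Sum>k<d. (c k)\<^sup>2) / 2) *
        ((\<Sum>i<d. u i * (m i + \<sigma>\<^sup>2 * c i))\<^sup>2 + \<sigma>\<^sup>2 * (\<Sum>i<d. (u i)\<^sup>2)))"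
proof -
  define E where "E = exp (\<sigma>\<^sup>2 * (\<Sum>k<d. (c k)\<^sup>2) / 2)"
  define a where "a i = m i + \<sigma>\<^sup>2 * c i" for i
  have hb: "has_bochner_integral (gauss d \<sigma>)
     (\<lambda>v. \<Sum>i<d. \<Sum>j<d. (u i * u j) * ((m i + v i) * (m j + v j) * exp (\<Sum>k<d. c k * v k)))
     (\<Sum>i<d. \<Sum>j<d. (u i * u j) * (E * (a i * a j + (if i = j then \<sigma>\<^sup>2 else 0))))"
    unfolding E_def a_def
    by (intro has_bochner_integral_sum has_bochner_integral_mult_right gauss_tilted_product_moment[OF s]) auto
  have integrand: "(\<Sum>i<d. u i * (m i + v i))\<^sup>2 * exp (\<Sum>k<d. c k * v k) =
     (\<Sum>i<d. \<Sum>j<d. (u i * u j) * ((m i + v i) * (m j + v j) * exp (\<Sum>k<d. c k * v k)))" for v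
  proof -
    have "(\<Sum>i<d. u i * (m i + v i))\<^sup>2 = (\<Sum>i<d. \<Sum>j<d. (u i * (m i + v i)) * (u j * (m j + v j)))"
      by (simp add: power2_eq_square sum_product)
    then show ?thesis by (simp add: sum_distrib_left sum_distrib_right mult_ac)
  qed
  have expanded: "(\<Sum>i<d. \<Sum>j<d. (u i * u j) * (E * (a i * a j + (if i = j then \<sigma>\<^sup>2 else 0)))) =
     E * ((\<Sum>i<d. u i * a i)\<^sup>2 + \<sigma>\<^sup>2 * (\<Sum>i<d. (u i)\<^sup>2))"
  proof -
    have "(u i * u j) * (E * (a i * a j + (if i = j then \<sigma>\<^sup>2 else 0))) =
       E * ((u i * a i) * (u j * a j)) + (if i = j then E * \<sigma>\<^sup>2 * (u i * u j) else 0)" for i j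
      by (simp add: algebra_simps)
    then have "(\<Sum>i<d. \<Sum>j<d. (u i * u j) * (E * (a i * a j + (if i = j then \<sigma>\<^sup>2 else 0)))) =
      (\<Sum>i<d. \<Sum>j<d. E * ((u i * a i) * (u j * a j))) +
      (\<Sum>i<d. \<Sum>j<d. if i = j then E * \<sigma>\<^sup>2 * (u i * u j) else 0)"
      by (simp add: sum.distrib)
    also have "(\<Sum>i<d. \<Sum>j<d. if i = j then E * \<sigma>\<^sup>2 * (u i * u j) else 0) = (\<Sum>i<d. E * \<sigma>\<^sup>2 * (u i)\<^sup>2)"
      by (intro sum.cong refl) (simp add: sum.delta power2_eq_square)
    finally show ?thesis
      by (simp add: power2_eq_square sum_product sum_distrib_left sum_distrib_right algebra_simps)
  qed
  show ?thesis using hb unfolding integrand[symmetric] expanded by (simp add: E_def a_def)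
qed

lemma gauss_coordinate_square_integrable:
  assumes "\<sigma> > 0" and "i < d"
  shows "integrable (gauss d \<sigma>) (\<lambda>v. (a + v i)\<^sup>2)"
  using gauss_tilted_product_moment[OF assms assms(2), of "\<lambda>_. a" "\<lambda>_. 0"]
  by (simp add: has_bochner_integral_iff power2_eq_square)

section \<open>The logistic function\<close>

definition logistic :: "real \<Rightarrow> real" where
  "logistic t = 1 / (1 + exp (- t))"

lemma logistic_bounds: "0 < logistic t" "logistic t < 1"
  unfolding logistic_def by (auto simp: add_pos_pos)

lemma logistic_measurable[measurable]: "logistic \<in> borel_measurable borel"
  unfolding logistic_def by measurable

lemma logistic_deriv: "DERIV logistic t :> exp (- t) / (1 + exp (- t))\<^sup>2"
proof -
  have nz: "1 + exp (- t) \<noteq> 0" by (smt (verit) exp_gt_zero)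
  have "((\<lambda>t. 1 / (1 + exp (- t))) has_real_derivative
      (0 * (1 + exp (- t)) - 1 * (0 + exp (- t) * - 1)) / ((1 + exp (- t)) * (1 + exp (- t)))) (at t)"
    by (intro derivative_intros DERIV_divide) (auto simp: nz)
  then show ?thesis unfolding logistic_def by (simp add: power2_eq_square)
qed

lemma logistic_deriv_bound: "exp (- t) / (1 + exp (- t))\<^sup>2 \<le> exp (- \<bar>t::real\<bar> / 4)"
proof -
  define u where "u = exp (- t)"
  have u0: "u > 0" unfolding u_def by simp
  show ?thesis
  proof (cases "t \<ge> 0")
    case True
    have "(1 + u)\<^sup>2 \<ge> 1" using u0 by (simp add: power2_eq_square algebra_simps add_nonneg_nonneg)
    then have "u / (1 + u)\<^sup>2 \<le> u / 1" using u0 by (intro divide_left_mono) auto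
    also have "\<dots> \<le> exp (- \<bar>t\<bar> / 4)" unfolding u_def using True by simp
    finally show ?thesis unfolding u_def .
  next
    case False
    have "(1 + u)\<^sup>2 \<ge> u\<^sup>2" using u0 by (intro power_mono) auto
    then have "u / (1 + u)\<^sup>2 \<le> u / u\<^sup>2" using u0 by (intro divide_left_mono) auto
    also have "\<dots> = exp t" using u0 unfolding u_def by (simp add: power2_eq_square exp_minus field_simps)
    also have "\<dots> \<le> exp (- \<bar>t\<bar> / 4)" using False by simp
    finally show ?thesis unfolding u_def .
  qed
qed

lemma logistic_lipschitz:
  assumes sign: "\<bar>\<epsilon>\<bar> \<le> 1"
  shows "\<bar>logistic a - logistic b\<bar> \<le> \<bar>a - b\<bar> * (exp (- \<epsilon> * a / 4) + exp (- \<epsilon> * b / 4))"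
proof -
  have ordered: "\<bar>logistic a - logistic b\<bar> \<le> (b - a) * (exp (- \<epsilon> * a / 4) + exp (- \<epsilon> * b / 4))"
    if ab: "a < b" for a b
  proof -
    obtain z where z: "a < z" "z < b"
      and mvt: "logistic b - logistic a = (b - a) * (exp (- z) / (1 + exp (- z))\<^sup>2)"
      using MVT2[OF ab, of logistic "\<lambda>t. exp (- t) / (1 + exp (- t))\<^sup>2"] logistic_deriv by blast
    have "\<bar>\<epsilon> * z\<bar> \<le> \<bar>z\<bar>" using sign by (simp add: abs_mult mult_left_le_one_le)
    then have "exp (- \<bar>z\<bar> / 4) \<le> exp (- \<epsilon> * z / 4)" by simp
    also have "\<dots> \<le> exp (- \<epsilon> * a / 4) + exp (- \<epsilon> * b / 4)"
    proof (cases "\<epsilon> \<ge> 0")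
      case True
      then have "\<epsilon> * a \<le> \<epsilon> * z" using z by (intro mult_left_mono) auto
      then show ?thesis by (simp add: add_increasing2)
    next
      case False
      then have "\<epsilon> * b \<le> \<epsilon> * z" using z by (intro mult_left_mono_neg) auto
      then show ?thesis by (simp add: add_increasing)
    qed
    finally have slope: "exp (- z) / (1 + exp (- z))\<^sup>2 \<le> exp (- \<epsilon> * a / 4) + exp (- \<epsilon> * b / 4)"
      using logistic_deriv_bound[of z] by linarith
    have "0 \<le> (b - a) * (exp (- z) / (1 + exp (- z))\<^sup>2)" using ab by simp
    then have "\<bar>logistic a - logistic b\<bar> = (b - a) * (exp (- z) / (1 + exp (- z))\<^sup>2)"
      using mvt by (simp add: abs_minus_commute)
    also have "\<dots> \<le> (b - a) * (exp (- \<epsilon> * a / 4) + exp (- \<epsilon> * b / 4))"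
      using ab slope by (intro mult_left_mono) auto
    finally show ?thesis .
  qed
  consider "a < b" | "a = b" | "b < a" by linarith
  then show ?thesis
    by cases (use ordered[of a b] ordered[of b a] in \<open>auto simp: abs_minus_commute add.commute\<close>)
qed

section \<open>Inner products and the EM weight\<close>

definition dotp :: "nat \<Rightarrow> (nat \<Rightarrow> real) \<Rightarrow> (nat \<Rightarrow> real) \<Rightarrow> real" where
  "dotp d u x = (\<Sum>i<d. u i * x i)"

lemma dotp_self_nonneg: "0 \<le> dotp d u u"
  unfolding dotp_def by (intro sum_nonneg) auto

lemma dotp_cauchy_schwarz: "(dotp d u w)\<^sup>2 \<le> dotp d u u * dotp d w w"
  unfolding dotp_def using Cauchy_Schwarz_ineq_sum[of u w "{..<d}"] by (simp add: power2_eq_square)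

lemma vnorm_square: "(vnorm d u)\<^sup>2 = dotp d u u"
  unfolding vnorm_def dotp_def by (simp add: sum_nonneg power2_eq_square)

lemma vnorm_nonneg: "0 \<le> vnorm d u"
  unfolding vnorm_def by (simp add: sum_nonneg)

lemma dotp_diff_left: "dotp d \<theta> y - dotp d \<theta>' y = dotp d (\<lambda>i. \<theta> i - \<theta>' i) y"
  unfolding dotp_def by (simp add: sum_subtractf left_diff_distrib)

(* The EM weight is the logistic function of the rescaled inner product, since
   |\<theta> + y|\<^sup>2 = |\<theta> - y|\<^sup>2 + 4\<langle>\<theta>,y\<rangle>. *)
lemma wgt_logistic:
  assumes s: "\<sigma> > 0"
  shows "wgt d \<sigma> \<theta> y = logistic (2 * dotp d \<theta> y / \<sigma>\<^sup>2)"
proof -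
  define A where "A = (\<Sum>i<d. (\<theta> i - y i)\<^sup>2)"
  define B where "B = (\<Sum>i<d. (\<theta> i + y i)\<^sup>2)"
  define P where "P = dotp d \<theta> y"
  have BA: "B = A + 4 * P" unfolding A_def B_def P_def dotp_def
    by (simp add: sum.distrib[symmetric] sum_distrib_left power2_eq_square algebra_simps)
  have "wgt d \<sigma> \<theta> y = exp (- A / (2 * \<sigma>\<^sup>2)) / (exp (- A / (2 * \<sigma>\<^sup>2)) + exp (- B / (2 * \<sigma>\<^sup>2)))"
    unfolding wgt_def A_def B_def vnorm_def by (simp add: sum_nonneg)
  also have "exp (- B / (2 * \<sigma>\<^sup>2)) = exp (- A / (2 * \<sigma>\<^sup>2)) * exp (- (2 * P / \<sigma>\<^sup>2))"
    unfolding BA exp_add[symmetric] using s by (simp add: field_simps)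
  also have "exp (- A / (2 * \<sigma>\<^sup>2)) / (exp (- A / (2 * \<sigma>\<^sup>2)) + exp (- A / (2 * \<sigma>\<^sup>2)) * exp (- (2 * P / \<sigma>\<^sup>2)))
     = logistic (2 * P / \<sigma>\<^sup>2)"
  proof -
    have "x / (x + x * t) = 1 / (1 + t)" if "x > 0" for x t :: real
    proof -
      have "x + x * t = x * (1 + t)" by (simp add: algebra_simps)
      then show ?thesis using that by simp
    qed
    then show ?thesis unfolding logistic_def by simp
  qed
  finally show ?thesis by (simp add: P_def)
qed

lemma wgt_shift_measurable:
  assumes "\<sigma> > 0"
  shows "(\<lambda>v. wgt d \<sigma> \<theta> (\<lambda>i. m i + v i)) \<in> borel_measurable (gauss d \<sigma>)"
proof -
  have "(\<lambda>v. dotp d \<theta> (\<lambda>i. m i + v i)) \<in> borel_measurable (gauss d \<sigma>)"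
    unfolding gauss_def dotp_def by measurable
  then show ?thesis unfolding wgt_logistic[OF assms] by measurable
qed

section \<open>One mixture component\<close>

lemma component_tilted_quadratic:
  assumes s: "\<sigma> > 0" and sign: "\<bar>\<epsilon>\<bar> = 1"
  shows "has_bochner_integral (gauss d \<sigma>)
     (\<lambda>v. exp (- \<epsilon> * dotp d \<phi> (\<lambda>i. \<epsilon> * \<theta>s i + v i) / (2 * \<sigma>\<^sup>2)) * (dotp d u (\<lambda>i. \<epsilon> * \<theta>s i + v i))\<^sup>2)
     (exp (- dotp d \<phi> \<theta>s / (2 * \<sigma>\<^sup>2) + dotp d \<phi> \<phi> / (8 * \<sigma>\<^sup>2)) *
        ((dotp d u (\<lambda>i. \<theta>s i - \<phi> i / 2))\<^sup>2 + \<sigma>\<^sup>2 * dotp d u u))"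
proof -
  have ss: "\<epsilon> * \<epsilon> = 1" using abs_mult_self_eq[of \<epsilon>] sign by simp
  define c where "c k = - \<epsilon> * \<phi> k / (2 * \<sigma>\<^sup>2)" for k
  define m where "m i = \<epsilon> * \<theta>s i" for i
  have q: "has_bochner_integral (gauss d \<sigma>)
     (\<lambda>v. exp (- dotp d \<phi> \<theta>s / (2 * \<sigma>\<^sup>2)) * ((\<Sum>i<d. u i * (m i + v i))\<^sup>2 * exp (\<Sum>k<d. c k * v k)))
     (exp (- dotp d \<phi> \<theta>s / (2 * \<sigma>\<^sup>2)) * (exp (\<sigma>\<^sup>2 * (\<Sum>k<d. (c k)\<^sup>2) / 2) *
        ((\<Sum>i<d. u i * (m i + \<sigma>\<^sup>2 * c i))\<^sup>2 + \<sigma>\<^sup>2 * (\<Sum>i<d. (u i)\<^sup>2))))"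
    by (intro has_bochner_integral_mult_right gauss_tilted_quadratic[OF s])
  have exponent: "- \<epsilon> * dotp d \<phi> (\<lambda>i. \<epsilon> * \<theta>s i + v i) / (2 * \<sigma>\<^sup>2) =
      - dotp d \<phi> \<theta>s / (2 * \<sigma>\<^sup>2) + (\<Sum>k<d. c k * v k)" for v
  proof -
    have "- \<epsilon> * dotp d \<phi> (\<lambda>i. \<epsilon> * \<theta>s i + v i) = - (\<epsilon> * \<epsilon>) * dotp d \<phi> \<theta>s + (\<Sum>k<d. (- \<epsilon> * \<phi> k) * v k)"
      unfolding dotp_def by (simp add: algebra_simps sum.distrib sum_distrib_left)
    then show ?thesis using s ss unfolding c_def by (simp add: sum_negf sum_divide_distrib[symmetric] field_simps)
  qed
  have integrand: "(\<lambda>v. exp (- \<epsilon> * dotp d \<phi> (\<lambda>i. \<epsilon> * \<theta>s i + v i) / (2 * \<sigma>\<^sup>2)) * (dotp d u (\<lambda>i. \<epsilon> * \<theta>s i + v i))\<^sup>2) =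
     (\<lambda>v. exp (- dotp d \<phi> \<theta>s / (2 * \<sigma>\<^sup>2)) * ((\<Sum>i<d. u i * (m i + v i))\<^sup>2 * exp (\<Sum>k<d. c k * v k)))"
    by (rule ext, simp only: exponent exp_add) (simp add: dotp_def m_def)
  have tilt: "\<sigma>\<^sup>2 * (\<Sum>k<d. (c k)\<^sup>2) / 2 = dotp d \<phi> \<phi> / (8 * \<sigma>\<^sup>2)"
  proof -
    have "(c k)\<^sup>2 = (\<epsilon> * \<epsilon>) * (\<phi> k * \<phi> k) / (4 * \<sigma>\<^sup>2 * \<sigma>\<^sup>2)" for k
      unfolding c_def by (simp add: power2_eq_square mult_ac)
    then have "\<sigma>\<^sup>2 * (\<Sum>k<d. (c k)\<^sup>2) / 2 = \<sigma>\<^sup>2 * (\<Sum>k<d. \<phi> k * \<phi> k) / (4 * \<sigma>\<^sup>2 * \<sigma>\<^sup>2) / 2"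
      using ss by (simp add: sum_divide_distrib[symmetric])
    also have "\<dots> = dotp d \<phi> \<phi> / (8 * \<sigma>\<^sup>2)"
      using s unfolding dotp_def by (simp add: field_simps power2_eq_square)
    finally show ?thesis .
  qed
  have mean: "(\<Sum>i<d. u i * (m i + \<sigma>\<^sup>2 * c i))\<^sup>2 = (dotp d u (\<lambda>i. \<theta>s i - \<phi> i / 2))\<^sup>2"
  proof -
    have "(\<Sum>i<d. u i * (m i + \<sigma>\<^sup>2 * c i)) = \<epsilon> * dotp d u (\<lambda>i. \<theta>s i - \<phi> i / 2)"
      unfolding dotp_def m_def c_def using s by (simp add: sum_distrib_left algebra_simps)
    then show ?thesis using ss by (simp add: power2_eq_square algebra_simps)
  qed
  have norm: "(\<Sum>i<d. (u i)\<^sup>2) = dotp d u u" unfolding dotp_def by (simp add: power2_eq_square)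
  have regroup: "exp (- dotp d \<phi> \<theta>s / (2 * \<sigma>\<^sup>2) + dotp d \<phi> \<phi> / (8 * \<sigma>\<^sup>2)) * X =
     exp (- dotp d \<phi> \<theta>s / (2 * \<sigma>\<^sup>2)) * (exp (dotp d \<phi> \<phi> / (8 * \<sigma>\<^sup>2)) * X)" for X
    by (simp only: exp_add mult.assoc)
  show ?thesis using q unfolding integrand tilt mean norm regroup .
qed

(* If the tilt direction \<phi> is close to \<theta>* in the sense of the two hypotheses (which hold
   for \<phi> = \<theta>* and for \<phi> = \<theta> in the local region), the closed form is exponentially small in
   |\<theta>*|\<^sup>2/\<sigma>\<^sup>2. *)
lemma component_tilted_quadratic_bound:
  assumes s: "\<sigma> > 0"
    and h1: "dotp d \<phi> \<theta>s \<ge> 3/4 * dotp d \<theta>s \<theta>s" and h2: "dotp d \<phi> \<phi> \<le> 25/16 * dotp d \<theta>s \<theta>s"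
  shows "exp (- dotp d \<phi> \<theta>s / (2 * \<sigma>\<^sup>2) + dotp d \<phi> \<phi> / (8 * \<sigma>\<^sup>2)) *
           ((dotp d u (\<lambda>i. \<theta>s i - \<phi> i / 2))\<^sup>2 + \<sigma>\<^sup>2 * dotp d u u)
    \<le> exp (- dotp d \<theta>s \<theta>s / (8 * \<sigma>\<^sup>2)) * (dotp d u u * (dotp d \<theta>s \<theta>s + \<sigma>\<^sup>2))"
proof -
  define R where "R = dotp d \<theta>s \<theta>s"
  define w where "w i = \<theta>s i - \<phi> i / 2" for i
  have R0: "R \<ge> 0" unfolding R_def by (rule dotp_self_nonneg)
  have ww: "dotp d w w = R - dotp d \<phi> \<theta>s + dotp d \<phi> \<phi> / 4"
    unfolding dotp_def w_def R_def
    by (simp add: algebra_simps sum.distrib sum_subtractf sum_divide_distrib[symmetric] sum_distrib_left)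
  have wR: "dotp d w w \<le> R" using ww h1 h2 R0 unfolding R_def[symmetric] by linarith
  have uu: "dotp d u u \<ge> 0" by (rule dotp_self_nonneg)
  have cs: "(dotp d u w)\<^sup>2 \<le> dotp d u u * R"
    using dotp_cauchy_schwarz[of d u w] mult_left_mono[OF wR uu] by linarith
  have exponent: "- dotp d \<phi> \<theta>s / (2 * \<sigma>\<^sup>2) + dotp d \<phi> \<phi> / (8 * \<sigma>\<^sup>2) \<le> - R / (8 * \<sigma>\<^sup>2)"
  proof -
    have "- 4 * dotp d \<phi> \<theta>s + dotp d \<phi> \<phi> \<le> - R" using h1 h2 R0 unfolding R_def[symmetric] by linarith
    then have "(- 4 * dotp d \<phi> \<theta>s + dotp d \<phi> \<phi>) / (8 * \<sigma>\<^sup>2) \<le> - R / (8 * \<sigma>\<^sup>2)"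
      using s by (intro divide_right_mono) auto
    then show ?thesis using s by (simp add: field_simps)
  qed
  have "exp (- dotp d \<phi> \<theta>s / (2 * \<sigma>\<^sup>2) + dotp d \<phi> \<phi> / (8 * \<sigma>\<^sup>2)) * ((dotp d u w)\<^sup>2 + \<sigma>\<^sup>2 * dotp d u u)
     \<le> exp (- R / (8 * \<sigma>\<^sup>2)) * (dotp d u u * (R + \<sigma>\<^sup>2))"
    using exponent cs uu by (intro mult_mono) (auto simp: algebra_simps)
  then show ?thesis unfolding w_def R_def .
qed

lemma abs_mult_le_weighted_squares:
  fixes p q k :: real
  assumes "k > 0"
  shows "\<bar>p\<bar> * \<bar>q\<bar> \<le> (k * p\<^sup>2 + q\<^sup>2 / k) / 2"
proof -
  have "0 \<le> (k * \<bar>p\<bar> - \<bar>q\<bar>)\<^sup>2 / k" using assms by simp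
  also have "(k * \<bar>p\<bar> - \<bar>q\<bar>)\<^sup>2 / k = k * p\<^sup>2 + q\<^sup>2 / k - 2 * (\<bar>p\<bar> * \<bar>q\<bar>)"
    using assms by (simp add: power2_eq_square field_simps)
  finally show ?thesis by simp
qed

lemma weight_difference_pointwise_bound:
  assumes s: "\<sigma> > 0" and sign: "\<bar>\<epsilon>\<bar> \<le> 1" and k: "k > 0"
  shows "2 * (wgt d \<sigma> \<theta> y - wgt d \<sigma> \<theta>s y) * dotp d z y \<le>
    2 / \<sigma>\<^sup>2 * ((exp (- \<epsilon> * dotp d \<theta> y / (2 * \<sigma>\<^sup>2)) + exp (- \<epsilon> * dotp d \<theta>s y / (2 * \<sigma>\<^sup>2)))
        * (k * (dotp d (\<lambda>i. \<theta> i - \<theta>s i) y)\<^sup>2 + (dotp d z y)\<^sup>2 / k))"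
proof -
  define a where "a = 2 * dotp d \<theta> y / \<sigma>\<^sup>2"
  define b where "b = 2 * dotp d \<theta>s y / \<sigma>\<^sup>2"
  define E where "E = exp (- \<epsilon> * dotp d \<theta> y / (2 * \<sigma>\<^sup>2)) + exp (- \<epsilon> * dotp d \<theta>s y / (2 * \<sigma>\<^sup>2))"
  define P where "P = dotp d (\<lambda>i. \<theta> i - \<theta>s i) y"
  define Q where "Q = dotp d z y"
  have E0: "E \<ge> 0" unfolding E_def by (intro add_nonneg_nonneg) auto
  have ea: "- \<epsilon> * a / 4 = - \<epsilon> * dotp d \<theta> y / (2 * \<sigma>\<^sup>2)" unfolding a_def using s by (simp add: field_simps)
  have eb: "- \<epsilon> * b / 4 = - \<epsilon> * dotp d \<theta>s y / (2 * \<sigma>\<^sup>2)" unfolding b_def using s by (simp add: field_simps)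
  have ab: "a - b = 2 * P / \<sigma>\<^sup>2"
    unfolding a_def b_def P_def dotp_diff_left[symmetric] by (simp add: diff_divide_distrib)
  have lip: "\<bar>logistic a - logistic b\<bar> \<le> \<bar>a - b\<bar> * E"
    using logistic_lipschitz[OF sign, of a b] unfolding E_def ea eb .
  have "(logistic a - logistic b) * Q \<le> \<bar>logistic a - logistic b\<bar> * \<bar>Q\<bar>"
    by (metis abs_ge_self abs_mult)
  then have "2 * (logistic a - logistic b) * Q \<le> 2 * \<bar>logistic a - logistic b\<bar> * \<bar>Q\<bar>"
    by (simp only: mult.assoc)
  also have "\<dots> \<le> 2 * (\<bar>a - b\<bar> * E) * \<bar>Q\<bar>"
    using lip by (intro mult_right_mono mult_left_mono) auto
  also have "\<dots> = 4 / \<sigma>\<^sup>2 * E * (\<bar>P\<bar> * \<bar>Q\<bar>)"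
    unfolding ab using s by (simp add: abs_mult abs_divide field_simps)
  also have "\<dots> \<le> 4 / \<sigma>\<^sup>2 * E * ((k * P\<^sup>2 + Q\<^sup>2 / k) / 2)"
    using abs_mult_le_weighted_squares[OF k, of P Q] E0 s by (intro mult_left_mono) auto
  also have "\<dots> = 2 / \<sigma>\<^sup>2 * (E * (k * P\<^sup>2 + Q\<^sup>2 / k))" by simp
  finally show ?thesis unfolding wgt_logistic[OF s] a_def[symmetric] b_def[symmetric] E_def P_def Q_def .
qed

(* The EM integrands are integrable: the weights lie in (0,1) and Y has second moments. *)
lemma em_integrand_integrable:
  assumes s: "\<sigma> > 0" and i: "i < d"
  shows "integrable (gauss d \<sigma>)
    (\<lambda>v. 2 * (wgt d \<sigma> \<theta> (\<lambda>j. m j + v j) - wgt d \<sigma> \<theta>' (\<lambda>j. m j + v j)) * (m i + v i))"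
proof (rule Bochner_Integration.integrable_bound)
  interpret G: prob_space "gauss d \<sigma>" by (rule gauss_prob_space[OF s])
  show "integrable (gauss d \<sigma>) (\<lambda>v. 1 + (m i + v i)\<^sup>2)"
    by (intro Bochner_Integration.integrable_add G.integrable_const gauss_coordinate_square_integrable s i)
  have "(\<lambda>v. m i + v i) \<in> borel_measurable (gauss d \<sigma>)"
    unfolding gauss_def using i
    by (intro borel_measurable_add borel_measurable_const measurable_component_singleton) auto
  then show "(\<lambda>v. 2 * (wgt d \<sigma> \<theta> (\<lambda>j. m j + v j) - wgt d \<sigma> \<theta>' (\<lambda>j. m j + v j)) * (m i + v i))
      \<in> borel_measurable (gauss d \<sigma>)"
    by (intro borel_measurable_times borel_measurable_diff borel_measurable_const wgt_shift_measurable[OF s])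
  show "AE v in gauss d \<sigma>. norm (2 * (wgt d \<sigma> \<theta> (\<lambda>j. m j + v j) - wgt d \<sigma> \<theta>' (\<lambda>j. m j + v j)) * (m i + v i))
      \<le> norm (1 + (m i + v i)\<^sup>2)"
  proof (rule AE_I2)
    fix v
    define W where "W = wgt d \<sigma> \<theta> (\<lambda>j. m j + v j) - wgt d \<sigma> \<theta>' (\<lambda>j. m j + v j)"
    define y where "y = m i + v i"
    have "\<bar>W\<bar> \<le> 1" unfolding W_def wgt_logistic[OF s] using logistic_bounds by (smt (verit))
    then have "\<bar>2 * W * y\<bar> \<le> 2 * \<bar>y\<bar>" by (simp add: abs_mult mult_left_le_one_le)
    also have "\<dots> \<le> 1 + y\<^sup>2" using sum_squares_ge_zero[of "\<bar>y\<bar> - 1" 0] by (simp add: power2_eq_square algebra_simps)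
    finally show "norm (2 * W * y) \<le> norm (1 + y\<^sup>2)" by simp
  qed
qed

lemma component_bound:
  assumes s: "\<sigma> > 0" and sign: "\<bar>\<epsilon>\<bar> = 1" and k: "k > 0"
    and h1: "dotp d \<theta> \<theta>s \<ge> 3/4 * dotp d \<theta>s \<theta>s" and h2: "dotp d \<theta> \<theta> \<le> 25/16 * dotp d \<theta>s \<theta>s"
  shows "(\<integral>v. 2 * (wgt d \<sigma> \<theta> (\<lambda>i. \<epsilon> * \<theta>s i + v i) - wgt d \<sigma> \<theta>s (\<lambda>i. \<epsilon> * \<theta>s i + v i))
              * dotp d z (\<lambda>i. \<epsilon> * \<theta>s i + v i) \<partial>gauss d \<sigma>)
     \<le> 4 / \<sigma>\<^sup>2 * exp (- dotp d \<theta>s \<theta>s / (8 * \<sigma>\<^sup>2)) * (dotp d \<theta>s \<theta>s + \<sigma>\<^sup>2) *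
        (k * dotp d (\<lambda>i. \<theta> i - \<theta>s i) (\<lambda>i. \<theta> i - \<theta>s i) + dotp d z z / k)"
proof -
  define \<Delta> where "\<Delta> = (\<lambda>i. \<theta> i - \<theta>s i)"
  define R where "R = dotp d \<theta>s \<theta>s"
  define E where "E = exp (- R / (8 * \<sigma>\<^sup>2))"
  define W where "W \<phi> v = exp (- \<epsilon> * dotp d \<phi> (\<lambda>i. \<epsilon> * \<theta>s i + v i) / (2 * \<sigma>\<^sup>2))" for \<phi> v
  define Q where "Q u v = (dotp d u (\<lambda>i. \<epsilon> * \<theta>s i + v i))\<^sup>2" for u v
  define T where "T \<phi> u = exp (- dotp d \<phi> \<theta>s / (2 * \<sigma>\<^sup>2) + dotp d \<phi> \<phi> / (8 * \<sigma>\<^sup>2)) *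
      ((dotp d u (\<lambda>i. \<theta>s i - \<phi> i / 2))\<^sup>2 + \<sigma>\<^sup>2 * dotp d u u)" for \<phi> u
  have TI: "has_bochner_integral (gauss d \<sigma>) (\<lambda>v. W \<phi> v * Q u v) (T \<phi> u)" for \<phi> u
    unfolding W_def Q_def T_def by (rule component_tilted_quadratic[OF s sign])
  have R0: "R \<ge> 0" unfolding R_def by (rule dotp_self_nonneg)
  have T_at_\<theta>: "T \<theta> u \<le> E * (dotp d u u * (R + \<sigma>\<^sup>2))" for u
    unfolding T_def E_def R_def by (rule component_tilted_quadratic_bound[OF s h1 h2])
  have T_at_\<theta>s: "T \<theta>s u \<le> E * (dotp d u u * (R + \<sigma>\<^sup>2))" for u
    unfolding T_def E_def R_def by (rule component_tilted_quadratic_bound[OF s]) (use R0 R_def in auto)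
  define F where "F v = 2 / \<sigma>\<^sup>2 * ((W \<theta> v + W \<theta>s v) * (k * Q \<Delta> v + Q z v / k))" for v
  have hF: "has_bochner_integral (gauss d \<sigma>) F
      (2 / \<sigma>\<^sup>2 * ((k * T \<theta> \<Delta> + T \<theta> z / k) + (k * T \<theta>s \<Delta> + T \<theta>s z / k)))"
  proof -
    have "F = (\<lambda>v. 2 / \<sigma>\<^sup>2 * ((k * (W \<theta> v * Q \<Delta> v) + W \<theta> v * Q z v / k) +
        (k * (W \<theta>s v * Q \<Delta> v) + W \<theta>s v * Q z v / k)))"
      unfolding F_def by (simp add: fun_eq_iff algebra_simps)
    then show ?thesis
      by (simp only:) (intro has_bochner_integral_mult_right has_bochner_integral_add
          has_bochner_integral_divide_zero TI)
  qed
  have pointwise: "2 * (wgt d \<sigma> \<theta> (\<lambda>i. \<epsilon> * \<theta>s i + v i) - wgt d \<sigma> \<theta>s (\<lambda>i. \<epsilon> * \<theta>s i + v i))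
      * dotp d z (\<lambda>i. \<epsilon> * \<theta>s i + v i) \<le> F v" for v
    unfolding F_def W_def Q_def \<Delta>_def using sign
    by (intro weight_difference_pointwise_bound[OF s _ k]) simp
  have F0: "0 \<le> F v" for v
    unfolding F_def W_def Q_def using k s by (auto intro!: mult_nonneg_nonneg add_nonneg_nonneg)
  have "(\<integral>v. 2 * (wgt d \<sigma> \<theta> (\<lambda>i. \<epsilon> * \<theta>s i + v i) - wgt d \<sigma> \<theta>s (\<lambda>i. \<epsilon> * \<theta>s i + v i))
           * dotp d z (\<lambda>i. \<epsilon> * \<theta>s i + v i) \<partial>gauss d \<sigma>) \<le> integral\<^sup>L (gauss d \<sigma>) F"
    using hF pointwise F0 by (intro integral_mono') (auto simp: has_bochner_integral_iff)
  also have "\<dots> = 2 / \<sigma>\<^sup>2 * ((k * T \<theta> \<Delta> + T \<theta> z / k) + (k * T \<theta>s \<Delta> + T \<theta>s z / k))"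
    using hF by (simp add: has_bochner_integral_iff)
  also have "\<dots> \<le> 2 / \<sigma>\<^sup>2 * ((k * (E * (dotp d \<Delta> \<Delta> * (R + \<sigma>\<^sup>2))) + E * (dotp d z z * (R + \<sigma>\<^sup>2)) / k) +
        (k * (E * (dotp d \<Delta> \<Delta> * (R + \<sigma>\<^sup>2))) + E * (dotp d z z * (R + \<sigma>\<^sup>2)) / k))"
    using k s T_at_\<theta>[of \<Delta>] T_at_\<theta>[of z] T_at_\<theta>s[of \<Delta>] T_at_\<theta>s[of z]
    by (intro mult_left_mono add_mono mult_left_mono divide_right_mono) auto
  also have "\<dots> = 4 / \<sigma>\<^sup>2 * E * (R + \<sigma>\<^sup>2) * (k * dotp d \<Delta> \<Delta> + dotp d z z / k)"
    using k s by (simp add: field_simps)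
  finally show ?thesis unfolding E_def R_def \<Delta>_def .
qed

section \<open>Assembling the contraction estimate\<close>

(* Geometry of the local region |\<theta> - \<theta>*| \<le> |\<theta>*|/4: \<theta> stays well aligned with \<theta>* and not
   much longer, which are exactly the hypotheses of the tilted-moment bound. *)
lemma local_region_inner_bounds:
  assumes near: "vnorm d (\<lambda>i. \<theta> i - \<theta>s i) \<le> vnorm d \<theta>s / 4"
  shows "dotp d \<theta> \<theta>s \<ge> 3/4 * dotp d \<theta>s \<theta>s" and "dotp d \<theta> \<theta> \<le> 25/16 * dotp d \<theta>s \<theta>s"
proof -
  define \<Delta> where "\<Delta> = (\<lambda>i. \<theta> i - \<theta>s i)"
  define r where "r = vnorm d \<theta>s"
  define \<delta> where "\<delta> = vnorm d \<Delta>"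
  have r0: "r \<ge> 0" and d0: "\<delta> \<ge> 0" unfolding r_def \<delta>_def by (rule vnorm_nonneg)+
  have dr: "\<delta> \<le> r / 4" using near unfolding \<delta>_def r_def \<Delta>_def .
  have cs: "\<bar>dotp d \<Delta> \<theta>s\<bar> \<le> \<delta> * r"
  proof -
    have "\<bar>dotp d \<Delta> \<theta>s\<bar>\<^sup>2 \<le> (\<delta> * r)\<^sup>2"
      using dotp_cauchy_schwarz[of d \<Delta> \<theta>s] unfolding power_mult_distrib \<delta>_def r_def vnorm_square by simp
    then show ?thesis using power2_le_imp_le[of "\<bar>dotp d \<Delta> \<theta>s\<bar>" "\<delta> * r"] d0 r0 by simp
  qed
  have cross: "\<bar>dotp d \<Delta> \<theta>s\<bar> \<le> dotp d \<theta>s \<theta>s / 4"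
  proof -
    have "\<delta> * r \<le> r / 4 * r" using dr r0 by (intro mult_right_mono) auto
    then show ?thesis using cs unfolding r_def vnorm_square[symmetric] by (simp add: power2_eq_square)
  qed
  have square: "dotp d \<Delta> \<Delta> \<le> dotp d \<theta>s \<theta>s / 16"
  proof -
    have "\<delta> * \<delta> \<le> (r / 4) * (r / 4)" using dr d0 by (intro mult_mono) auto
    then show ?thesis unfolding \<delta>_def r_def vnorm_square[symmetric] by (simp add: power2_eq_square)
  qed
  have "dotp d \<theta> \<theta>s = dotp d \<theta>s \<theta>s + dotp d \<Delta> \<theta>s"
    unfolding dotp_def \<Delta>_def by (simp add: sum.distrib[symmetric] algebra_simps)
  then show "dotp d \<theta> \<theta>s \<ge> 3/4 * dotp d \<theta>s \<theta>s" using cross by linarith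
  have "dotp d \<theta> \<theta> = dotp d \<theta>s \<theta>s + 2 * dotp d \<Delta> \<theta>s + dotp d \<Delta> \<Delta>"
    unfolding dotp_def \<Delta>_def
    by (simp add: sum.distrib[symmetric] sum_distrib_left algebra_simps power2_eq_square)
  then show "dotp d \<theta> \<theta> \<le> 25/16 * dotp d \<theta>s \<theta>s" using cross square by linarith
qed

lemma gmm_expect_linear_combination:
  assumes pos: "\<And>i. i < d \<Longrightarrow> integrable (gauss d \<sigma>) (\<lambda>v. f i (\<lambda>j. \<theta>s j + v j))"
    and neg: "\<And>i. i < d \<Longrightarrow> integrable (gauss d \<sigma>) (\<lambda>v. f i (\<lambda>j. - \<theta>s j + v j))"
  shows "(\<Sum>i<d. z i * gmm_expect d \<sigma> \<theta>s (f i)) = gmm_expect d \<sigma> \<theta>s (\<lambda>y. \<Sum>i<d. z i * f i y)"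
proof -
  have component: "(\<integral>v. (\<Sum>i<d. z i * f i (\<lambda>j. m j + v j)) \<partial>gauss d \<sigma>) =
      (\<Sum>i<d. z i * (\<integral>v. f i (\<lambda>j. m j + v j) \<partial>gauss d \<sigma>))"
    if "\<And>i. i < d \<Longrightarrow> integrable (gauss d \<sigma>) (\<lambda>v. f i (\<lambda>j. m j + v j))" for m
    using that by (subst Bochner_Integration.integral_sum) auto
  show ?thesis
    unfolding gmm_expect_def using component[of \<theta>s] component[of "\<lambda>j. - \<theta>s j"] pos neg
    by (simp add: sum_distrib_left sum.distrib algebra_simps)
qed

(* If Z\<^sup>2 \<le> A(k\<delta>\<^sup>2 + Z\<^sup>2/k) for every k > 0 and 2A < 1, then Z \<le> 2A\<delta> (take k = Z/\<delta>). *)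
lemma self_bounded_le:
  fixes Z \<delta> A :: real
  assumes Z0: "Z \<ge> 0" and d0: "\<delta> \<ge> 0" and A0: "A \<ge> 0" and A1: "2 * A < 1"
    and h: "\<And>k. k > 0 \<Longrightarrow> Z\<^sup>2 \<le> A * (k * \<delta>\<^sup>2 + Z\<^sup>2 / k)"
  shows "Z \<le> 2 * A * \<delta>"
proof (cases "Z = 0")
  case True
  then show ?thesis using A0 d0 by simp
next
  case False
  then have Zp: "Z > 0" using Z0 by simp
  show ?thesis
  proof (cases "\<delta> = 0")
    case True
    have "Z\<^sup>2 \<le> A * Z\<^sup>2" using h[of 1] True by simp
    moreover have "A * Z\<^sup>2 < 1 * Z\<^sup>2" using A1 Zp by (intro mult_strict_right_mono) auto
    ultimately show ?thesis by linarith
  next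
    case False
    then have dp: "\<delta> > 0" using d0 by simp
    have "Z\<^sup>2 \<le> A * (Z / \<delta> * \<delta>\<^sup>2 + Z\<^sup>2 / (Z / \<delta>))" using h[of "Z / \<delta>"] Zp dp by simp
    also have "Z / \<delta> * \<delta>\<^sup>2 + Z\<^sup>2 / (Z / \<delta>) = 2 * Z * \<delta>"
      using Zp dp by (simp add: power2_eq_square field_simps)
    finally have "Z * Z \<le> Z * (2 * A * \<delta>)" by (simp add: power2_eq_square mult_ac)
    then show ?thesis using Zp by simp
  qed
qed

lemma polynomial_exp_decay:
  fixes x :: real
  assumes "x \<ge> 2500"
  shows "8 * (x + 1) * exp (- x / 8) \<le> exp (- x / 24)"
proof -
  have taylor: "1 + x / 12 + (x * x) / 288 \<le> exp (x / 12)"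
    using exp_lower_Taylor_quadratic[of "x / 12"] assms by (simp add: power2_eq_square)
  have "2500 * x \<le> x * x" using assms by (intro mult_right_mono) auto
  then have "2500 * x / 288 \<le> x * x / 288" by (intro divide_right_mono) auto
  moreover have "8 * (x + 1) = 8 * x + 8" by simp
  ultimately have "8 * (x + 1) \<le> exp (x / 12)" using taylor assms by linarith
  then have "8 * (x + 1) * exp (- x / 8) \<le> exp (x / 12) * exp (- x / 8)" by (intro mult_right_mono) auto
  also have "\<dots> = exp (- x / 24)" by (simp add: exp_add[symmetric])
  finally show ?thesis .
qed

lemma contraction_factor_bound:
  fixes \<sigma> R :: real
  assumes s: "\<sigma> > 0" and snr: "2500 * \<sigma>\<^sup>2 \<le> R"
  shows "2 * (4 / \<sigma>\<^sup>2 * exp (- R / (8 * \<sigma>\<^sup>2)) * (R + \<sigma>\<^sup>2)) \<le> exp (- R / (24 * \<sigma>\<^sup>2))"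
    and "exp (- R / (24 * \<sigma>\<^sup>2)) < 1"
proof -
  have x: "2500 \<le> R / \<sigma>\<^sup>2" using snr s by (simp add: field_simps)
  have "2 * (4 / \<sigma>\<^sup>2 * exp (- R / (8 * \<sigma>\<^sup>2)) * (R + \<sigma>\<^sup>2)) =
      8 * (R / \<sigma>\<^sup>2 + 1) * exp (- (R / \<sigma>\<^sup>2) / 8)"
    using s by (simp add: field_simps)
  also have "\<dots> \<le> exp (- (R / \<sigma>\<^sup>2) / 24)" by (rule polynomial_exp_decay[OF x])
  finally show "2 * (4 / \<sigma>\<^sup>2 * exp (- R / (8 * \<sigma>\<^sup>2)) * (R + \<sigma>\<^sup>2)) \<le> exp (- R / (24 * \<sigma>\<^sup>2))"
    by (simp add: mult.commute)
  have "0 < R / \<sigma>\<^sup>2" using x by linarith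
  then have "0 < R / (24 * \<sigma>\<^sup>2)" using s by (simp add: zero_less_divide_iff)
  then show "exp (- R / (24 * \<sigma>\<^sup>2)) < 1" by simp
qed

lemma em_contraction:
  assumes s: "\<sigma> > 0" and snr: "2500 * \<sigma>\<^sup>2 \<le> (vnorm d \<theta>s)\<^sup>2"
    and near: "vnorm d (\<lambda>i. \<theta> i - \<theta>s i) \<le> vnorm d \<theta>s / 4"
  shows "vnorm d (\<lambda>i. gmm_expect d \<sigma> \<theta>s (\<lambda>y. 2 * (wgt d \<sigma> \<theta> y - wgt d \<sigma> \<theta>s y) * y i))
     \<le> exp (- (vnorm d \<theta>s)\<^sup>2 / (24 * \<sigma>\<^sup>2)) * vnorm d (\<lambda>i. \<theta> i - \<theta>s i)"
proof -
  define g where "g y = 2 * (wgt d \<sigma> \<theta> y - wgt d \<sigma> \<theta>s y)" for y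
  define z where "z i = gmm_expect d \<sigma> \<theta>s (\<lambda>y. g y * y i)" for i
  define Z where "Z = vnorm d z"
  define \<delta> where "\<delta> = vnorm d (\<lambda>i. \<theta> i - \<theta>s i)"
  define R where "R = (vnorm d \<theta>s)\<^sup>2"
  define A where "A = 4 / \<sigma>\<^sup>2 * exp (- R / (8 * \<sigma>\<^sup>2)) * (R + \<sigma>\<^sup>2)"
  note inner = local_region_inner_bounds[OF near]
  have Z_square: "Z\<^sup>2 = gmm_expect d \<sigma> \<theta>s (\<lambda>y. g y * dotp d z y)"
  proof -
    have "Z\<^sup>2 = (\<Sum>i<d. z i * gmm_expect d \<sigma> \<theta>s (\<lambda>y. g y * y i))"
      unfolding Z_def vnorm_square dotp_def z_def ..
    also have "\<dots> = gmm_expect d \<sigma> \<theta>s (\<lambda>y. \<Sum>i<d. z i * (g y * y i))"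
      unfolding g_def by (intro gmm_expect_linear_combination em_integrand_integrable[OF s])
    finally show ?thesis by (simp add: dotp_def sum_distrib_left mult_ac)
  qed
  have self_bound: "Z\<^sup>2 \<le> A * (k * \<delta>\<^sup>2 + Z\<^sup>2 / k)" if k: "k > 0" for k
  proof -
    have "(\<integral>v. g (\<lambda>i. \<epsilon> * \<theta>s i + v i) * dotp d z (\<lambda>i. \<epsilon> * \<theta>s i + v i) \<partial>gauss d \<sigma>)
        \<le> A * (k * \<delta>\<^sup>2 + Z\<^sup>2 / k)" if "\<bar>\<epsilon>\<bar> = 1" for \<epsilon>
      using component_bound[OF s that k inner, of z]
      unfolding g_def A_def R_def \<delta>_def Z_def vnorm_square by simp
    from this[of 1] this[of "-1"] show ?thesis
      unfolding Z_square gmm_expect_def by simp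
  qed
  have factor: "2 * A \<le> exp (- R / (24 * \<sigma>\<^sup>2))" and A_small: "2 * A < 1"
    using contraction_factor_bound[OF s snr[folded R_def]] unfolding A_def by linarith+
  have A0: "A \<ge> 0" unfolding A_def R_def using s by simp
  have Z0: "Z \<ge> 0" and \<delta>0: "\<delta> \<ge> 0" unfolding Z_def \<delta>_def by (rule vnorm_nonneg)+
  have "Z \<le> 2 * A * \<delta>" by (rule self_bounded_le[OF Z0 \<delta>0 A0 A_small self_bound])
  also have "\<dots> \<le> exp (- R / (24 * \<sigma>\<^sup>2)) * \<delta>"
    using factor \<delta>0 by (rule mult_right_mono)
  finally show ?thesis unfolding Z_def z_def g_def \<delta>_def R_def .
qed

lemma em_contraction_at_snr:
  assumes s: "\<sigma> > 0" and \<eta>: "50 \<le> \<eta>" and snr: "\<eta> \<le> vnorm d \<theta>s / \<sigma>"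
    and near: "vnorm d (\<lambda>i. \<theta> i - \<theta>s i) \<le> vnorm d \<theta>s / 4"
  shows "vnorm d (\<lambda>i. gmm_expect d \<sigma> \<theta>s (\<lambda>y. 2 * (wgt d \<sigma> \<theta> y - wgt d \<sigma> \<theta>s y) * y i))
     \<le> exp (- (1/24) * \<eta>\<^sup>2) * vnorm d (\<lambda>i. \<theta> i - \<theta>s i)"
proof -
  have "\<eta>\<^sup>2 \<le> (vnorm d \<theta>s / \<sigma>)\<^sup>2" using \<eta> snr by (intro power_mono) auto
  then have ratio: "\<eta>\<^sup>2 \<le> (vnorm d \<theta>s)\<^sup>2 / \<sigma>\<^sup>2" by (simp add: power_divide)
  have "2500 \<le> \<eta>\<^sup>2" using power_mono[OF \<eta>, of 2] by simp
  then have "2500 * \<sigma>\<^sup>2 \<le> \<eta>\<^sup>2 * \<sigma>\<^sup>2" by (intro mult_right_mono) auto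
  moreover have "\<eta>\<^sup>2 * \<sigma>\<^sup>2 \<le> (vnorm d \<theta>s)\<^sup>2" using ratio s by (simp add: field_simps)
  ultimately have large: "2500 * \<sigma>\<^sup>2 \<le> (vnorm d \<theta>s)\<^sup>2" by linarith
  have decay: "exp (- (vnorm d \<theta>s)\<^sup>2 / (24 * \<sigma>\<^sup>2)) \<le> exp (- (1/24) * \<eta>\<^sup>2)"
    using ratio by simp
  have "vnorm d (\<lambda>i. gmm_expect d \<sigma> \<theta>s (\<lambda>y. 2 * (wgt d \<sigma> \<theta> y - wgt d \<sigma> \<theta>s y) * y i))
      \<le> exp (- (vnorm d \<theta>s)\<^sup>2 / (24 * \<sigma>\<^sup>2)) * vnorm d (\<lambda>i. \<theta> i - \<theta>s i)"
    by (rule em_contraction[OF s large near])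
  also have "\<dots> \<le> exp (- (1/24) * \<eta>\<^sup>2) * vnorm d (\<lambda>i. \<theta> i - \<theta>s i)"
    by (rule mult_right_mono[OF decay vnorm_nonneg])
  finally show ?thesis .
qed

theorem lemma3:
  shows "\<exists>c2 > 0. \<exists>\<eta>0 > 0. \<forall>(d::nat) (\<sigma>::real) (\<theta>s::nat \<Rightarrow> real) (\<eta>::real).
     \<sigma> > 0 \<and> \<eta> \<ge> \<eta>0 \<and> vnorm d \<theta>s / \<sigma> \<ge> \<eta> \<longrightarrow>
     (\<exists>\<gamma>::real. 0 < \<gamma> \<and> \<gamma> < 1 \<and> \<gamma> \<le> exp (- c2 * \<eta>\<^sup>2) \<and>
       (\<forall>\<theta>::nat \<Rightarrow> real. vnorm d (\<lambda>i. \<theta> i - \<theta>s i) \<le> vnorm d \<theta>s / 4 \<longrightarrow>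
          vnorm d (\<lambda>i. gmm_expect d \<sigma> \<theta>s
                       (\<lambda>y. 2 * (wgt d \<sigma> \<theta> y - wgt d \<sigma> \<theta>s y) * y i))
            \<le> \<gamma> * vnorm d (\<lambda>i. \<theta> i - \<theta>s i)))"
proof (rule exI[of _ "1/24"], rule conjI, simp, rule exI[of _ 50], rule conjI, simp,
    intro allI impI, elim conjE)
  fix d :: nat and \<sigma> :: real and \<theta>s :: "nat \<Rightarrow> real" and \<eta> :: real
  assume s: "\<sigma> > 0" and \<eta>: "50 \<le> \<eta>" and snr: "\<eta> \<le> vnorm d \<theta>s / \<sigma>"
  show "\<exists>\<gamma>. 0 < \<gamma> \<and> \<gamma> < 1 \<and> \<gamma> \<le> exp (- (1/24) * \<eta>\<^sup>2) \<and>
       (\<forall>\<theta>::nat \<Rightarrow> real. vnorm d (\<lambda>i. \<theta> i - \<theta>s i) \<le> vnorm d \<theta>s / 4 \<longrightarrow>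
          vnorm d (\<lambda>i. gmm_expect d \<sigma> \<theta>s (\<lambda>y. 2 * (wgt d \<sigma> \<theta> y - wgt d \<sigma> \<theta>s y) * y i))
            \<le> \<gamma> * vnorm d (\<lambda>i. \<theta> i - \<theta>s i))"
    by (intro exI[of _ "exp (- (1/24) * \<eta>\<^sup>2)"] conjI allI impI em_contraction_at_snr[OF s \<eta> snr])
      (use \<eta> in auto)
qed

end
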